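(* Let $G=(V,E,\{w_j\})$ be a reduced instance of the line highway problem with $[s,\ell]$-valuation (with $s\ge1$), and let $r=s/\ell$. Let $\mathbf p$ be the price vector output by the algorithm $\mathrm{Line}_{[s,\ell]}$ described in the context. Then \[ \frac{\mathrm{Opt}_{\rm coup}(G)}{\mathbf{E}[\mathrm{Profit}_{\rm coup}(\mathbf p)]}\le \begin{cases} 4(1-\ln r) & 0\le r\le\alpha \text{ or } 1/\sqrt e\le r\le 1,\\ 3/r & \alpha<r\le 1/2,\\ 6 & 1/2<r<1/\sqrt e,\end{cases} \] where $\alpha\approx 0.3824$ is the solution of $3/x=4(1-\ln x)$.
   Context: For integers $a\le b$, $[a,b]=\{a,\dots,b\}$. A reduced instance of the line highway problem is $G=(V,E,\{w_j\})$ with $V=[1,n]$ and a finite multiset of customers $e_j=[j_s,j_t]$ ($1\le j_s\le j_t\le n$) with integer valuations $w_j>0$; it has $[s,\ell]$-valuation if $s=\min_j w_j$, $\ell=\max_j w_j$. For $\mathbf p\in\mathbb R^n$, $p(e_j)=\sum_{i\in e_j}p_i$, $\mathrm{Profit}_{\rm coup}(\mathbf p)=\sum_{j:\,w_j\ge p(e_j)}\max\{p(e_j),0\}$, $\mathrm{Opt}_{\rm coup}(G)=\max_{\mathbf p}\mathrm{Profit}_{\rm coup}(\mathbf p)$. DAG representation: vertices $u_0,\dots,u_n$, arc $u_{j_s-1}\to u_{j_t}$ for each $e_j$; partial sums $(s_0,\dots,s_n)$ give prices $p_i=s_i-s_{i-1}$. Algorithm Line_Random: choose each $s_i$ independently uniformly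 from $\{0,\dots,\ell\}$ and output the resulting prices $\boldsymbol\sigma$. Algorithm Line_Cut: mark each DAG vertex independently with probability $1/2$, let $L$ be marked and $R$ unmarked vertices; for each integer $x\in[s,\ell]$ set partial sum $0$ on $L$ and $x$ on $R$ giving $\boldsymbol\tau_x$; output $\boldsymbol\tau$ maximizing $\mathrm{Profit}_{\rm coup}$ among the $\boldsymbol\tau_x$. Algorithm $\mathrm{Line}_{[s,\ell]}$: run Line_Random to get $\boldsymbol\sigma$, run Line_Cut to get $\boldsymbol\tau$, and output $\mathbf p\in\{\boldsymbol\sigma,\boldsymbol\tau\}$ with $\mathrm{Profit}_{\rm coup}(\mathbf p)=\max\{\mathrm{Profit}_{\rm coup}(\boldsymbol\sigma),\mathrm{Profit}_{\rm coup}(\boldsymbol\tau)\}$. Expectations are over the algorithm's randomness. *)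

theory Defs
  imports "HOL-Probability.Probability"
begin

(* A customer is a triple (j_s, j_t, w_j): the interval [j_s, j_t] of items
   (edges of the line) and the integer valuation w_j.
   Prices are functions nat => real; only indices 1..n are relevant. *)

type_synonym customer = "nat \<times> nat \<times> nat"

definition price_of :: "(nat \<Rightarrow> real) \<Rightarrow> nat \<Rightarrow> nat \<Rightarrow> real" where
  "price_of p a b = (\<Sum>i\<in>{a..b}. p i)"

definition profit_coup :: "customer multiset \<Rightarrow> (nat \<Rightarrow> real) \<Rightarrow> real" where
  "profit_coup cs p =
     sum_mset (image_mset (\<lambda>(a, b, w).
        if real w \<ge> price_of p a b then max (price_of p a b) 0 else 0) cs)"

definition opt_coup :: "customer multiset \<Rightarrow> real" where
  "opt_coup cs = (SUP p. profit_coup cs p)"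

(* prices from partial sums s_0,...,s_n on DAG vertices u_0..u_n: p_i = s_i - s_{i-1} *)
definition sums_to_prices :: "(nat \<Rightarrow> int) \<Rightarrow> nat \<Rightarrow> real" where
  "sums_to_prices S i = of_int (S i - S (i - 1))"

definition random_sums :: "nat \<Rightarrow> nat \<Rightarrow> (nat \<Rightarrow> int) pmf" where
  "random_sums n l = Pi_pmf {0..n} 0 (\<lambda>_. pmf_of_set {0..int l})"

definition random_marks :: "nat \<Rightarrow> (nat \<Rightarrow> bool) pmf" where
  "random_marks n = Pi_pmf {0..n} False (\<lambda>_. bernoulli_pmf (1/2))"

(* tau_x: partial sum 0 on marked vertices L, x on unmarked vertices R *)
definition cut_prices :: "(nat \<Rightarrow> bool) \<Rightarrow> int \<Rightarrow> nat \<Rightarrow> real" where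
  "cut_prices M x = sums_to_prices (\<lambda>v. if M v then 0 else x)"

definition cut_profit :: "customer multiset \<Rightarrow> nat \<Rightarrow> nat \<Rightarrow> (nat \<Rightarrow> bool) \<Rightarrow> real" where
  "cut_profit cs s l M = Max ((\<lambda>x. profit_coup cs (cut_prices M x)) ` {int s..int l})"

(* E[Profit_coup(p)] for the output p of Line_[s,l]: the better of sigma and tau,
   with Line_Random and Line_Cut using independent randomness *)
definition line_expected_profit :: "nat \<Rightarrow> customer multiset \<Rightarrow> nat \<Rightarrow> nat \<Rightarrow> real" where
  "line_expected_profit n cs s l =
     measure_pmf.expectation (pair_pmf (random_sums n l) (random_marks n))
       (\<lambda>(S, M). max (profit_coup cs (sums_to_prices S)) (cut_profit cs s l M))"

definition alpha_const :: real where
  "alpha_const = (THE x. 0 < x \<and> x \<le> 1 \<and> 3 / x = 4 * (1 - ln x))"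

definition ratio_bound :: "real \<Rightarrow> real" where
  "ratio_bound r =
     (if (0 \<le> r \<and> r \<le> alpha_const) \<or> (1 / sqrt (exp 1) \<le> r \<and> r \<le> 1) then 4 * (1 - ln r)
      else if alpha_const < r \<and> r \<le> 1/2 then 3 / r
      else 6)"

end

theory Submission
  imports Defs
begin

text \<open>
  The optimum is at most the total valuation \<open>W = \<Sum> w\<^sub>j\<close>, and the expected profit \<open>E\<close> of
  Line_[s,\<ell>] dominates the expected profit of each of its two sub-algorithms.
  Line_Random charges a customer the difference of two independent uniform values on
  \<open>{0..\<ell>}\<close>, so it earns \<open>w(w+1)(3\<ell>+2-2w)/(6(\<ell>+1)\<^sup>2)\<close> in expectation from a customer of
  valuation \<open>w\<close>. The cut price vector \<open>\<tau>\<^sub>x\<close> earns \<open>x\<close> from a customer exactly when the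
  left end of its arc is marked and the right end is not, i.e. \<open>x/4\<close> in expectation from
  every customer with \<open>w \<ge> x\<close>. Summing these cut bounds over the thresholds
  \<open>x \<in> (s,\<ell>]\<close> gives a harmonic sum and \<open>W \<le> 4(1 - ln r) E\<close>; for \<open>r \<le> 1/2\<close> a weighted
  combination of the random bound and the cut at \<open>x = s\<close> gives \<open>W \<le> 3E/r\<close>, and for
  \<open>r > 1/2\<close> the random bound alone gives \<open>W \<le> 6E\<close>.
\<close>

section \<open>Marginals of product pmfs and finite sums\<close>

lemma map_pmf_Pi_pmf_pair:
  assumes "finite A" "i \<in> A" "j \<in> A" "i \<noteq> j"
  shows "map_pmf (\<lambda>f. (f i, f j)) (Pi_pmf A d p) = pair_pmf (p i) (p j)"
proof -
  have A: "A = insert i (A - {i})" using assms by auto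
  have "map_pmf (\<lambda>f. (f i, f j)) (Pi_pmf A d p) =
        map_pmf (\<lambda>f. (f i, f j)) (map_pmf (\<lambda>(y, f). f(i := y)) (pair_pmf (p i) (Pi_pmf (A - {i}) d p)))"
    by (subst A, subst Pi_pmf_insert) (use assms in auto)
  also have "\<dots> = map_pmf (\<lambda>(y, f). (y, f j)) (pair_pmf (p i) (Pi_pmf (A - {i}) d p))"
    by (simp add: pmf.map_comp o_def case_prod_unfold assms(4)[symmetric])
  also have "\<dots> = pair_pmf (map_pmf id (p i)) (map_pmf (\<lambda>f. f j) (Pi_pmf (A - {i}) d p))"
    by (subst map_pair[symmetric]) (simp add: id_def)
  also have "\<dots> = pair_pmf (p i) (p j)"
    using assms by (subst Pi_pmf_component) auto
  finally show ?thesis .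
qed

lemma expectation_Pi_pmf_pair:
  fixes g :: "'b \<Rightarrow> 'b \<Rightarrow> real"
  assumes "finite A" "i \<in> A" "j \<in> A" "i \<noteq> j"
  shows "measure_pmf.expectation (Pi_pmf A d p) (\<lambda>f. g (f i) (f j)) =
         measure_pmf.expectation (pair_pmf (p i) (p j)) (\<lambda>(x, y). g x y)"
  using integral_map_pmf[of "\<lambda>f. (f i, f j)" "Pi_pmf A d p" "\<lambda>(x, y). g x y"]
  by (simp add: map_pmf_Pi_pmf_pair[OF assms])

lemma expectation_pair_pmf_of_set:
  fixes g :: "'a \<Rightarrow> 'a \<Rightarrow> real"
  assumes "finite X" "X \<noteq> {}"
  shows "measure_pmf.expectation (pair_pmf (pmf_of_set X) (pmf_of_set X)) (\<lambda>(x, y). g x y) =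
         (\<Sum>x\<in>X. \<Sum>y\<in>X. g x y) / (real (card X))^2"
proof -
  have "measure_pmf.expectation (pair_pmf (pmf_of_set X) (pmf_of_set X)) (\<lambda>(x, y). g x y) =
     (\<Sum>z\<in>X \<times> X. (case z of (x, y) \<Rightarrow> g x y) * pmf (pair_pmf (pmf_of_set X) (pmf_of_set X)) z)"
    by (rule integral_measure_pmf_real) (use assms in auto)
  also have "\<dots> = (\<Sum>z\<in>X \<times> X. (case z of (x, y) \<Rightarrow> g x y) / (real (card X))^2)"
    using assms by (intro sum.cong refl) (auto simp: pmf_pair power2_eq_square pmf_of_set[OF assms(2,1)])
  also have "\<dots> = (\<Sum>x\<in>X. \<Sum>y\<in>X. g x y) / (real (card X))^2"
    by (simp add: sum.cartesian_product' sum_divide_distrib)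
  finally show ?thesis .
qed

lemma expectation_sum_mset:
  fixes F :: "'c \<Rightarrow> 'a \<Rightarrow> real"
  assumes "finite (set_pmf P)"
  shows "measure_pmf.expectation P (\<lambda>z. \<Sum>c\<in>#M. F c z) = (\<Sum>c\<in>#M. measure_pmf.expectation P (F c))"
proof (induction M)
  case (add c M)
  have "measure_pmf.expectation P (\<lambda>z. F c z + (\<Sum>c\<in>#M. F c z))
      = measure_pmf.expectation P (F c) + measure_pmf.expectation P (\<lambda>z. \<Sum>c\<in>#M. F c z)"
    by (rule Bochner_Integration.integral_add) (auto intro: integrable_measure_pmf_finite[OF assms])
  with add show ?case by simp
qed simp

lemma sum_mset_sum_swap:
  "(\<Sum>c\<in>#M. \<Sum>x\<in>A. f c x) = (\<Sum>x\<in>A. \<Sum>c\<in>#M. f c x)"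
  by (induction M) (simp_all add: sum.distrib)

lemma sum_inverse_le_ln:
  assumes "1 \<le> s" "s \<le> l"
  shows "(\<Sum>x\<in>{s<..l}. 1 / real x) \<le> ln (real l) - ln (real s)"
  using assms(2)
proof (induction l rule: dec_induct)
  case (step m)
  have m: "1 \<le> m" using step assms(1) by simp
  have "ln (real m / (real m + 1)) \<le> real m / (real m + 1) - 1"
    using m by (intro ln_le_minus_one) auto
  then have "1 / (real m + 1) \<le> ln (real m + 1) - ln (real m)"
    using m by (simp add: ln_div field_simps)
  moreover have "{s<..Suc m} = insert (Suc m) {s<..m}" using step by auto
  ultimately show ?case using step by (simp add: add.commute)
qed simp

section \<open>Prices from partial sums and the gain of a customer\<close>

lemma price_of_sums_to_prices:
  fixes S :: "nat \<Rightarrow> int"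
  assumes "1 \<le> a" "a \<le> b"
  shows "price_of (sums_to_prices S) a b = of_int (S b - S (a - 1))"
  using assms(2)
proof (induction b rule: dec_induct)
  case base
  then show ?case using assms(1) by (simp add: price_of_def sums_to_prices_def)
next
  case (step b)
  then have "{a..Suc b} = insert (Suc b) {a..b}" by auto
  with step show ?case by (simp add: price_of_def sums_to_prices_def)
qed

definition gain :: "nat \<Rightarrow> real \<Rightarrow> real" where
  "gain w q = (if q \<le> real w then max q 0 else 0)"

lemma profit_coup_eq_sum_gain:
  "profit_coup cs p = (\<Sum>(a, b, w)\<in>#cs. gain w (price_of p a b))"
  by (simp add: profit_coup_def gain_def)

lemma gain_le: "gain w q \<le> real w"
  by (simp add: gain_def)

lemma gain_nonpos_price: "q \<le> 0 \<Longrightarrow> gain w q = 0"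
  by (simp add: gain_def)

lemma sum_gain_atLeastAtMost:
  "(\<Sum>t\<in>{1..int K}. gain w (of_int t)) = real (min K w) * (real (min K w) + 1) / 2"
proof (induction K)
  case (Suc K)
  have "{1..int (Suc K)} = insert (int K + 1) {1..int K}" by auto
  with Suc show ?case by (cases "K < w") (auto simp: gain_def field_simps)
qed simp

lemma sum_gain_differences:
  "(\<Sum>x\<in>{0..int L}. \<Sum>y\<in>{0..int L}. gain w (of_int (y - x))) =
     (if L \<le> w then real L * (real L + 1) * (real L + 2) / 6
      else real w * (real w + 1) * (3 * real L + 2 - 2 * real w) / 6)"
proof (induction L)
  case 0 then show ?case by (simp add: gain_def)
next
  case (Suc L)
  have I: "{0..int (Suc L)} = insert (int L + 1) {0..int L}" by auto
  have new_row: "(\<Sum>y\<in>{0..int (Suc L)}. gain w (of_int (y - (int L + 1)))) = 0"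
    by (intro sum.neutral) (auto intro: gain_nonpos_price)
  have new_column: "(\<Sum>x\<in>{0..int L}. gain w (of_int (int L + 1 - x))) = real (min (Suc L) w) * (real (min (Suc L) w) + 1) / 2"
  proof -
    have "(\<Sum>x\<in>{0..int L}. gain w (of_int (int L + 1 - x))) = (\<Sum>t\<in>{1..int (Suc L)}. gain w (of_int t))"
      by (rule sum.reindex_bij_witness[of _ "\<lambda>t. int L + 1 - t" "\<lambda>x. int L + 1 - x"]) auto
    then show ?thesis by (simp only: sum_gain_atLeastAtMost)
  qed
  have "(\<Sum>x\<in>{0..int (Suc L)}. \<Sum>y\<in>{0..int (Suc L)}. gain w (of_int (y - x))) =
        (\<Sum>x\<in>{0..int L}. \<Sum>y\<in>{0..int (Suc L)}. gain w (of_int (y - x)))"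
    using new_row by (subst (1) I) simp
  also have "\<dots> = (\<Sum>x\<in>{0..int L}. gain w (of_int (int L + 1 - x)) + (\<Sum>y\<in>{0..int L}. gain w (of_int (y - x))))"
    by (subst I) simp
  also have "\<dots> = real (min (Suc L) w) * (real (min (Suc L) w) + 1) / 2 +
      (if L \<le> w then real L * (real L + 1) * (real L + 2) / 6
       else real w * (real w + 1) * (3 * real L + 2 - 2 * real w) / 6)"
    by (simp only: sum.distrib new_column Suc)
  finally show ?case
    by (cases "L = w") (auto simp: field_simps)
qed

section \<open>Expected profits of Line_Random and Line_Cut\<close>

definition expected_random_gain :: "nat \<Rightarrow> nat \<Rightarrow> real" where
  "expected_random_gain l w =
     real w * (real w + 1) * (3 * real l + 2 - 2 * real w) / (6 * (real l + 1)^2)"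

lemma expectation_random_gain:
  assumes "1 \<le> a" "a \<le> b" "b \<le> n" "w \<le> l"
  shows "measure_pmf.expectation (random_sums n l) (\<lambda>S. gain w (price_of (sums_to_prices S) a b))
         = expected_random_gain l w"
proof -
  have "measure_pmf.expectation (random_sums n l) (\<lambda>S. gain w (price_of (sums_to_prices S) a b))
      = measure_pmf.expectation (random_sums n l) (\<lambda>S. (\<lambda>x y. gain w (of_int (y - x))) (S (a - 1)) (S b))"
    by (simp only: price_of_sums_to_prices[OF assms(1,2)])
  also have "\<dots> = measure_pmf.expectation (pair_pmf (pmf_of_set {0..int l}) (pmf_of_set {0..int l}))
                    (\<lambda>(x, y). gain w (of_int (y - x)))"
    unfolding random_sums_def by (rule expectation_Pi_pmf_pair) (use assms in auto)
  also have "\<dots> = (\<Sum>x\<in>{0..int l}. \<Sum>y\<in>{0..int l}. gain w (of_int (y - x))) / (real l + 1)^2"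
    by (subst expectation_pair_pmf_of_set) (auto simp: add.commute)
  also have "\<dots> = expected_random_gain l w"
    unfolding sum_gain_differences expected_random_gain_def
    using assms(4) by (cases "l = w") (auto simp: field_simps)
  finally show ?thesis .
qed

lemma expectation_cut_gain:
  assumes "1 \<le> a" "a \<le> b" "b \<le> n" "0 \<le> x"
  shows "measure_pmf.expectation (random_marks n) (\<lambda>M. gain w (price_of (cut_prices M x) a b))
         = (if x \<le> int w then of_int x else 0) / 4"
proof -
  let ?h = "\<lambda>u v. gain w (of_int ((if v then 0 else x) - (if u then 0 else x)))"
  have "measure_pmf.expectation (random_marks n) (\<lambda>M. gain w (price_of (cut_prices M x) a b))
      = measure_pmf.expectation (random_marks n) (\<lambda>M. ?h (M (a - 1)) (M b))"
    by (simp only: cut_prices_def price_of_sums_to_prices[OF assms(1,2)])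
  also have "\<dots> = measure_pmf.expectation (pair_pmf (bernoulli_pmf (1/2)) (bernoulli_pmf (1/2)))
                    (\<lambda>(u, v). ?h u v)"
    unfolding random_marks_def by (rule expectation_Pi_pmf_pair) (use assms in auto)
  also have "\<dots> = (\<Sum>z\<in>{(True, True), (True, False), (False, True), (False, False)}. (case z of (u, v) \<Rightarrow> ?h u v) *
                     pmf (pair_pmf (bernoulli_pmf (1/2)) (bernoulli_pmf (1/2))) z)"
    by (rule integral_measure_pmf_real) auto
  also have "\<dots> = (if x \<le> int w then of_int x else 0) / 4"
    using assms by (simp add: pmf_pair gain_def)
  finally show ?thesis .
qed

lemma finite_set_pmf_random_sums: "finite (set_pmf (random_sums n l))"
  unfolding random_sums_def by (subst set_Pi_pmf) auto

lemma finite_set_pmf_random_marks: "finite (set_pmf (random_marks n))"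
  unfolding random_marks_def by (subst set_Pi_pmf) auto

lemma expectation_random_profit:
  assumes "\<forall>(a, b, w)\<in>#cs. 1 \<le> a \<and> a \<le> b \<and> b \<le> n \<and> w \<le> l"
  shows "measure_pmf.expectation (random_sums n l) (\<lambda>S. profit_coup cs (sums_to_prices S))
       = (\<Sum>(a, b, w)\<in>#cs. expected_random_gain l w)"
  unfolding profit_coup_eq_sum_gain
  by (subst expectation_sum_mset[OF finite_set_pmf_random_sums], rule arg_cong[where f = sum_mset])
     (use assms in \<open>auto intro!: image_mset_cong simp: expectation_random_gain\<close>)

lemma expectation_cut_profit:
  assumes "\<forall>(a, b, w)\<in>#cs. 1 \<le> a \<and> a \<le> b \<and> b \<le> n"
  shows "measure_pmf.expectation (random_marks n) (\<lambda>M. profit_coup cs (cut_prices M (int x)))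
       = (\<Sum>(a, b, w)\<in>#cs. (if x \<le> w then real x else 0) / 4)"
  unfolding profit_coup_eq_sum_gain
  by (subst expectation_sum_mset[OF finite_set_pmf_random_marks], rule arg_cong[where f = sum_mset])
     (use assms in \<open>auto intro!: image_mset_cong simp: expectation_cut_gain\<close>)

lemma line_expected_profit_ge:
  assumes "\<And>S M. f S M \<le> max (profit_coup cs (sums_to_prices S)) (cut_profit cs s l M)"
  shows "measure_pmf.expectation (pair_pmf (random_sums n l) (random_marks n)) (\<lambda>(S, M). f S M)
           \<le> line_expected_profit n cs s l"
proof -
  have "finite (set_pmf (pair_pmf (random_sums n l) (random_marks n)))"
    using finite_set_pmf_random_sums finite_set_pmf_random_marks by simp
  then show ?thesis
    unfolding line_expected_profit_def
    by (intro integral_mono integrable_measure_pmf_finite) (auto simp: assms)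
qed

lemma random_profit_le_line_expected_profit:
  "measure_pmf.expectation (random_sums n l) (\<lambda>S. profit_coup cs (sums_to_prices S))
     \<le> line_expected_profit n cs s l"
  using line_expected_profit_ge[of "\<lambda>S M. profit_coup cs (sums_to_prices S)" cs s l n]
    expectation_pair_pmf_fst[where f = "\<lambda>S. profit_coup cs (sums_to_prices S)"
      and p = "random_sums n l" and q = "random_marks n"]
  by (simp add: case_prod_unfold)

lemma cut_profit_le_line_expected_profit:
  assumes "s \<le> x" "x \<le> l"
  shows "measure_pmf.expectation (random_marks n) (\<lambda>M. profit_coup cs (cut_prices M (int x)))
     \<le> line_expected_profit n cs s l"
proof -
  have "profit_coup cs (cut_prices M (int x)) \<le> cut_profit cs s l M" for M
    unfolding cut_profit_def using assms by (intro Max_ge) auto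
  then show ?thesis
    using line_expected_profit_ge[of "\<lambda>S M. profit_coup cs (cut_prices M (int x))" cs s l n]
      expectation_pair_pmf_snd[where f = "\<lambda>M. profit_coup cs (cut_prices M (int x))"
        and p = "random_sums n l" and q = "random_marks n"]
    by (simp add: case_prod_unfold max.coboundedI2)
qed

lemma opt_coup_le_sum_valuations: "opt_coup cs \<le> (\<Sum>(a, b, w)\<in>#cs. real w)"
  unfolding opt_coup_def profit_coup_eq_sum_gain
  by (rule cSUP_least) (auto intro: sum_mset_mono simp: gain_le)

section \<open>Bounding the total valuation\<close>

lemma sum_cut_gain_at_min:
  fixes ws :: "nat multiset"
  assumes "\<forall>w\<in>#ws. s \<le> w"
  shows "(\<Sum>w\<in>#ws. (if s \<le> w then real s else 0) / 4) = real (size ws) * real s / 4"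
proof -
  have "(\<Sum>w\<in>#ws. (if s \<le> w then real s else 0) / 4) = (\<Sum>w\<in>#ws. real s / 4)"
    using assms by (intro arg_cong[where f = sum_mset] image_mset_cong) auto
  then show ?thesis by simp
qed

text \<open>Layer-cake argument: \<open>w = s + #{x \<in> (s,l]. x \<le> w}\<close>, and by the cut at threshold \<open>x\<close>
  at most \<open>4E/x\<close> valuations are \<open>\<ge> x\<close>.\<close>

lemma valuation_sum_le_cut_bound:
  fixes ws :: "nat multiset"
  assumes val: "\<forall>w\<in>#ws. s \<le> w \<and> w \<le> l" and "1 \<le> s" "s \<le> l"
    and cut: "\<And>x. s \<le> x \<Longrightarrow> x \<le> l \<Longrightarrow> (\<Sum>w\<in>#ws. (if x \<le> w then real x else 0) / 4) \<le> E"
  shows "(\<Sum>w\<in>#ws. real w) \<le> 4 * (1 - ln (real s / real l)) * E"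
proof -
  define N where "N x = (\<Sum>w\<in>#ws. if x \<le> w then 1 else 0 :: real)" for x
  have cut_N: "real x * N x \<le> 4 * E" if "s \<le> x" "x \<le> l" for x
  proof -
    have "(\<Sum>w\<in>#ws. (if x \<le> w then real x else 0) / 4) = (\<Sum>w\<in>#ws. real x / 4 * (if x \<le> w then 1 else 0))"
      by (intro arg_cong[where f = sum_mset] image_mset_cong) auto
    also have "\<dots> = real x / 4 * N x"
      unfolding N_def sum_mset_distrib_left ..
    finally show ?thesis using cut[OF that] by linarith
  qed
  have Ns: "N s = real (size ws)"
  proof -
    have "N s = (\<Sum>w\<in>#ws. 1)"
      unfolding N_def using val by (intro arg_cong[where f = sum_mset] image_mset_cong) auto
    then show ?thesis by simp
  qed
  have E0: "0 \<le> E"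
    using cut_N[of s] assms(3) mult_nonneg_nonneg[of "real s" "real (size ws)"] unfolding Ns by linarith
  have "real w = real s + (\<Sum>x\<in>{s<..l}. if x \<le> w then 1 else 0)" if "w \<in># ws" for w
  proof -
    have "(\<Sum>x\<in>{s<..l}. if x \<le> w then 1 else 0 :: real) = (\<Sum>x\<in>{x\<in>{s<..l}. x \<le> w}. 1)"
      by (rule sum.inter_filter[symmetric]) simp
    also have "{x\<in>{s<..l}. x \<le> w} = {s<..w}" using val that by auto
    finally show ?thesis using val that by simp
  qed
  then have "(\<Sum>w\<in>#ws. real w) = (\<Sum>w\<in>#ws. real s + (\<Sum>x\<in>{s<..l}. if x \<le> w then 1 else 0))"
    by (intro arg_cong[where f = sum_mset] image_mset_cong) auto
  also have "\<dots> = real s * N s + (\<Sum>x\<in>{s<..l}. N x)"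
    unfolding Ns unfolding N_def by (simp add: sum_mset.distrib sum_mset_sum_swap)
  also have "\<dots> \<le> 4 * E + (\<Sum>x\<in>{s<..l}. 4 * E * (1 / real x))"
  proof (intro add_mono sum_mono)
    fix x assume "x \<in> {s<..l}"
    then have "real x * N x \<le> 4 * E" "0 < real x" using cut_N by auto
    then show "N x \<le> 4 * E * (1 / real x)" by (simp add: field_simps)
  qed (use cut_N assms in auto)
  also have "\<dots> = 4 * E * (1 + (\<Sum>x\<in>{s<..l}. 1 / real x))"
    by (simp add: sum_distrib_left algebra_simps)
  also have "\<dots> \<le> 4 * E * (1 + (ln (real l) - ln (real s)))"
    using sum_inverse_le_ln[OF assms(2,3)] E0 by (intro mult_left_mono) auto
  also have "\<dots> = 4 * (1 - ln (real s / real l)) * E"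
    using assms by (simp add: ln_div)
  finally show ?thesis .
qed

lemma mixing_polynomial_nonneg:
  fixes s w l :: real
  assumes "1 \<le> s" "s \<le> w" "w \<le> l" "2 * s \<le> l"
  shows "0 \<le> l * w * (w + 1) * (3 * l + 2 - 2 * w) + 3 * l * (l - 2 * s) * (l + 1)^2
             - 2 * w * (2 * l - 3 * s) * (l + 1)^2"
proof (cases "2 * w \<le> l")
  case True
  define k where "k = l - 2 * w"
  have "0 \<le> k" "0 \<le> w" using True assms k_def by auto
  then have "0 \<le> 3*k^2 + 6*k^3 + 3*k^4 + 4*w*k + 19*w*k^2 + 14*w*k^3 + 2*w^2 + 16*w^2*k
               + 21*w^2*k^2 + 4*w^3 + 10*w^3*k + 6 * (l + 1)^2 * (l - w) * (w - s)"
    using assms by simp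
  also have "\<dots> = l * w * (w + 1) * (3 * l + 2 - 2 * w) + 3 * l * (l - 2 * s) * (l + 1)^2
             - 2 * w * (2 * l - 3 * s) * (l + 1)^2"
    unfolding k_def by (simp add: algebra_simps power2_eq_square power3_eq_cube power4_eq_xxxx)
  finally show ?thesis .
next
  case False
  then have "0 \<le> l * w * ((l - w) * (2 * w - l) + l + 1) + 3 * (l + 1)^2 * (l - w) * (l - 2 * s)"
    using assms by simp
  also have "\<dots> = l * w * (w + 1) * (3 * l + 2 - 2 * w) + 3 * l * (l - 2 * s) * (l + 1)^2
             - 2 * w * (2 * l - 3 * s) * (l + 1)^2"
    by (simp add: algebra_simps power2_eq_square)
  finally show ?thesis .
qed

text \<open>The weights \<open>s\<close> for Line_Random and \<open>2(l - 2s)\<close> for the cut at threshold \<open>s\<close> make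
  the difference of the two sides a nonnegative polynomial.\<close>

lemma expected_random_gain_mixing_bound:
  assumes "1 \<le> s" "s \<le> w" "w \<le> l" "2 * s \<le> l"
  shows "(2 * real l - 3 * real s) * real s * real w
           \<le> 3 * real l * (real s * expected_random_gain l w + (real l - 2 * real s) * real s / 2)"
proof -
  let ?phi = "real l * real w * (real w + 1) * (3 * real l + 2 - 2 * real w)
      + 3 * real l * (real l - 2 * real s) * (real l + 1)^2
      - 2 * real w * (2 * real l - 3 * real s) * (real l + 1)^2"
  let ?u = "expected_random_gain l w" and ?d = "3 * real l * (real s * expected_random_gain l w
      + (real l - 2 * real s) * real s / 2) - (2 * real l - 3 * real s) * real s * real w"
  have u: "?u * (real l + 1)^2 = real w * (real w + 1) * (3 * real l + 2 - 2 * real w) / 6"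
    unfolding expected_random_gain_def by simp
  have "(real l + 1)^2 * ?d = 3 * real l * real s * (?u * (real l + 1)^2)
      + (real l + 1)^2 * (3 * real l * ((real l - 2 * real s) * real s / 2) - (2 * real l - 3 * real s) * real s * real w)"
    by (simp add: algebra_simps)
  also have "\<dots> = real s * ?phi / 2"
    unfolding u by (simp add: field_simps power2_eq_square)
  also have "\<dots> \<ge> 0"
    using assms mixing_polynomial_nonneg[of "real s" "real w" "real l"] by simp
  finally have "0 \<le> (real l + 1)^2 * ?d" .
  then have "0 \<le> ?d"
    by (simp add: zero_le_mult_iff)
  then show ?thesis by simp
qed

lemma expected_random_gain_ge:
  assumes "l < 2 * s" "s \<le> w" "w \<le> l"
  shows "real w / 6 \<le> expected_random_gain l w"
proof -
  have "(real l + 1)^2 = (real w + 1) * (3 * real l + 2 - 2 * real w) - ((real l - real w) * (2 * real w - real l) + real l + 1)"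
    by (simp add: algebra_simps power2_eq_square)
  moreover have "0 \<le> (real l - real w) * (2 * real w - real l)"
    using assms by simp
  ultimately have "(real l + 1)^2 \<le> (real w + 1) * (3 * real l + 2 - 2 * real w)"
    by linarith
  then have "real w * (real l + 1)^2 \<le> real w * ((real w + 1) * (3 * real l + 2 - 2 * real w))"
    by (intro mult_left_mono) auto
  then show ?thesis
    unfolding expected_random_gain_def by (simp add: field_simps)
qed

lemma valuation_sum_le_mixing_bound:
  fixes ws :: "nat multiset"
  assumes val: "\<forall>w\<in>#ws. s \<le> w \<and> w \<le> l" and "1 \<le> s" "2 * s \<le> l"
    and random: "(\<Sum>w\<in>#ws. expected_random_gain l w) \<le> E"
    and cut: "(\<Sum>w\<in>#ws. (if s \<le> w then real s else 0) / 4) \<le> E"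
  shows "real s * (\<Sum>w\<in>#ws. real w) \<le> 3 * real l * E"
proof -
  let ?K = "(real l - 2 * real s) * real s / 2"
  have size: "real (size ws) * real s \<le> 4 * E"
    using cut val by (simp add: sum_cut_gain_at_min)
  have l_pos: "0 < 2 * real l - 3 * real s" "0 \<le> real l - 2 * real s"
    using assms by linarith+
  have "(2 * real l - 3 * real s) * (real s * (\<Sum>w\<in>#ws. real w))
      = (\<Sum>w\<in>#ws. (2 * real l - 3 * real s) * real s * real w)"
    by (simp add: sum_mset_distrib_left mult.assoc)
  also have "\<dots> \<le> (\<Sum>w\<in>#ws. 3 * real l * (real s * expected_random_gain l w + ?K))"
    using val assms by (intro sum_mset_mono expected_random_gain_mixing_bound) auto
  also have "\<dots> = 3 * real l * (real s * (\<Sum>w\<in>#ws. expected_random_gain l w)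
      + (real l - 2 * real s) * (real (size ws) * real s) / 2)"
    by (simp only: sum_mset_distrib_left[symmetric] sum_mset.distrib sum_mset_constant) simp
  also have "\<dots> \<le> 3 * real l * (real s * E + (real l - 2 * real s) * (4 * E) / 2)"
    using random size l_pos assms
    by (intro mult_left_mono add_mono divide_right_mono) auto
  also have "\<dots> = (2 * real l - 3 * real s) * (3 * real l * E)"
    by (simp add: field_simps)
  finally show ?thesis
    using l_pos by simp
qed

lemma valuation_sum_le_random_bound:
  fixes ws :: "nat multiset"
  assumes val: "\<forall>w\<in>#ws. s \<le> w \<and> w \<le> l" and "l < 2 * s"
    and random: "(\<Sum>w\<in>#ws. expected_random_gain l w) \<le> E"
  shows "(\<Sum>w\<in>#ws. real w) \<le> 6 * E"
proof -
  have "(\<Sum>w\<in>#ws. real w) = 6 * (\<Sum>w\<in>#ws. real w / 6)"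
    by (simp add: sum_mset_distrib_left)
  also have "\<dots> \<le> 6 * (\<Sum>w\<in>#ws. expected_random_gain l w)"
    using val assms by (intro mult_left_mono sum_mset_mono expected_random_gain_ge) auto
  finally show ?thesis
    using random by linarith
qed

lemma le_ratio_bound:
  assumes "0 \<le> r" "x \<le> 4 * (1 - ln r)" "r \<le> 1/2 \<Longrightarrow> x \<le> 3 / r" "1/2 < r \<Longrightarrow> x \<le> 6"
  shows "x \<le> ratio_bound r"
  using assms unfolding ratio_bound_def by auto

lemma valuation_sum_div_le_ratio_bound:
  fixes ws :: "nat multiset"
  assumes val: "\<forall>w\<in>#ws. s \<le> w \<and> w \<le> l" and "ws \<noteq> {#}" and s_ge1: "1 \<le> s"
    and random: "(\<Sum>w\<in>#ws. expected_random_gain l w) \<le> E"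
    and cut: "\<And>x. s \<le> x \<Longrightarrow> x \<le> l \<Longrightarrow> (\<Sum>w\<in>#ws. (if x \<le> w then real x else 0) / 4) \<le> E"
  shows "0 < E \<and> (\<Sum>w\<in>#ws. real w) / E \<le> ratio_bound (real s / real l)"
proof
  from \<open>ws \<noteq> {#}\<close> obtain w0 where "w0 \<in># ws" by (meson multiset_nonemptyE)
  with val have "s \<le> l" by (meson order_trans)
  have "0 < real (size ws) * real s"
    using \<open>ws \<noteq> {#}\<close> s_ge1 by (simp add: nonempty_has_size)
  then show "0 < E"
    using cut[of s] val \<open>s \<le> l\<close> by (simp add: sum_cut_gain_at_min)
  show "(\<Sum>w\<in>#ws. real w) / E \<le> ratio_bound (real s / real l)"
  proof (rule le_ratio_bound)
    show "(\<Sum>w\<in>#ws. real w) / E \<le> 4 * (1 - ln (real s / real l))"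
      using valuation_sum_le_cut_bound[OF val s_ge1 \<open>s \<le> l\<close> cut] \<open>0 < E\<close>
      by (simp add: pos_divide_le_eq)
    show "(\<Sum>w\<in>#ws. real w) / E \<le> 3 / (real s / real l)" if "real s / real l \<le> 1 / 2"
    proof -
      have "real (2 * s) \<le> real l"
        using that s_ge1 \<open>s \<le> l\<close> by (simp add: field_simps)
      then show ?thesis
        using valuation_sum_le_mixing_bound[OF val s_ge1 _ random cut] \<open>0 < E\<close> s_ge1
        by (simp only: of_nat_le_iff) (simp add: field_simps)
    qed
    show "(\<Sum>w\<in>#ws. real w) / E \<le> 6" if "1 / 2 < real s / real l"
    proof -
      have "real l < real (2 * s)"
        using that s_ge1 \<open>s \<le> l\<close> by (simp add: field_simps)
      then show ?thesis
        using valuation_sum_le_random_bound[OF val _ random] \<open>0 < E\<close>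
        by (simp only: of_nat_less_iff) (simp add: field_simps)
    qed
  qed simp
qed

theorem theorem3:
  fixes n :: nat and cs :: "customer multiset" and s l :: nat
  assumes nonempty: "cs \<noteq> {#}"
    and valid: "\<forall>(a, b, w) \<in># cs. 1 \<le> a \<and> a \<le> b \<and> b \<le> n \<and> 0 < w"
    and s_def: "s = Min ((\<lambda>(a, b, w). w) ` set_mset cs)"
    and l_def: "l = Max ((\<lambda>(a, b, w). w) ` set_mset cs)"
    and s_ge1: "1 \<le> s"
  shows "0 < line_expected_profit n cs s l \<and>
         opt_coup cs / line_expected_profit n cs s l \<le> ratio_bound (real s / real l)"
proof -
  define ws where "ws = image_mset (\<lambda>(a, b, w). w) cs"
  define E where "E = line_expected_profit n cs s l"
  have sum_ws: "(\<Sum>w\<in>#ws. f w) = (\<Sum>(a, b, w)\<in>#cs. f w)" for f :: "nat \<Rightarrow> real"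
    unfolding ws_def by (simp add: image_mset.compositionality o_def case_prod_unfold)
  have val_cs: "\<forall>(a, b, w)\<in>#cs. s \<le> w \<and> w \<le> l"
    unfolding s_def l_def by (auto intro!: Min_le Max_ge image_eqI)
  have items: "\<forall>(a, b, w)\<in>#cs. 1 \<le> a \<and> a \<le> b \<and> b \<le> n"
    using valid by auto
  with val_cs have items_le: "\<forall>(a, b, w)\<in>#cs. 1 \<le> a \<and> a \<le> b \<and> b \<le> n \<and> w \<le> l"
    by auto
  have "0 < E \<and> (\<Sum>w\<in>#ws. real w) / E \<le> ratio_bound (real s / real l)"
  proof (rule valuation_sum_div_le_ratio_bound[OF _ _ s_ge1])
    show "\<forall>w\<in>#ws. s \<le> w \<and> w \<le> l" "ws \<noteq> {#}"
      using val_cs nonempty unfolding ws_def by auto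
    show "(\<Sum>w\<in>#ws. expected_random_gain l w) \<le> E"
      using random_profit_le_line_expected_profit[of n l cs s]
      unfolding sum_ws E_def expectation_random_profit[OF items_le] .
    show "(\<Sum>w\<in>#ws. (if x \<le> w then real x else 0) / 4) \<le> E" if "s \<le> x" "x \<le> l" for x
      using cut_profit_le_line_expected_profit[OF that, of n cs]
      unfolding sum_ws E_def expectation_cut_profit[OF items] .
  qed
  moreover have "opt_coup cs \<le> (\<Sum>w\<in>#ws. real w)"
    using opt_coup_le_sum_valuations[of cs] by (simp only: sum_ws)
  ultimately show ?thesis
    unfolding E_def by (meson divide_right_mono order_trans less_imp_le)
qed

end
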